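(* Let $A=(a_{ij}), B=(b_{ij})\in\mathbb{R}^{n\times n}_+$ be Schur-stable extended Leslie matrices, i.e. entrywise nonnegative matrices whose only possibly nonzero entries are those in the first row, the subdiagonal entries $(i,i-1)$ for $2\le i\le n$, and the $(n,n)$ entry. Let $\mathcal{L}_{A,B}$ be the set of entrywise nonnegative matrices $D\in\mathbb{R}^{n\times n}$ whose only possibly nonzero entries are the subdiagonal entries $d_{i,i-1}$ ($2\le i\le n$) and the entry $d_{nn}$, and such that $A-D\ge 0$ and $B-D\ge 0$ entrywise. Let $\mathcal{L}^1_{A,B}$ be the set of those $D\in\mathcal{L}_{A,B}$ that have only one non-zero row (all other rows zero). Then for every $D\in\mathcal{L}^1_{A,B}$ the matrix $$M=\begin{pmatrix} A-D & D\\ D & B-D\end{pmatrix}$$ is Schur-stable.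
   Context: A real square matrix is Schur-stable if its spectral radius is strictly less than $1$. $\mathbb{R}^{n\times n}_+$ denotes the set of entrywise nonnegative $n\times n$ real matrices; inequalities between matrices are entrywise. *)

theory Defs
  imports "Jordan_Normal_Form.Spectral_Radius"
begin

(* Indices are 0-based: row/column i of the paper is i-1 here. *)

definition nonneg_mat :: "real mat \<Rightarrow> bool" where
  "nonneg_mat A \<longleftrightarrow> (\<forall>i<dim_row A. \<forall>j<dim_col A. A $$ (i,j) \<ge> 0)"

definition schur_stable :: "real mat \<Rightarrow> bool" where
  "schur_stable A \<longleftrightarrow> spectral_radius (map_mat complex_of_real A) < 1"

definition extended_leslie :: "nat \<Rightarrow> real mat \<Rightarrow> bool" where
  "extended_leslie n A \<longleftrightarrow> A \<in> carrier_mat n n \<and> nonneg_mat A \<and>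
     (\<forall>i<n. \<forall>j<n. A $$ (i,j) \<noteq> 0 \<longrightarrow> i = 0 \<or> i = j + 1 \<or> (i = n - 1 \<and> j = n - 1))"

definition L_set :: "nat \<Rightarrow> real mat \<Rightarrow> real mat \<Rightarrow> real mat set" where
  "L_set n A B = {D. D \<in> carrier_mat n n \<and> nonneg_mat D \<and>
     (\<forall>i<n. \<forall>j<n. D $$ (i,j) \<noteq> 0 \<longrightarrow> i = j + 1 \<or> (i = n - 1 \<and> j = n - 1)) \<and>
     nonneg_mat (A - D) \<and> nonneg_mat (B - D)}"

definition L1_set :: "nat \<Rightarrow> real mat \<Rightarrow> real mat \<Rightarrow> real mat set" where
  "L1_set n A B = {D \<in> L_set n A B. \<exists>k<n. (\<exists>j<n. D $$ (k,j) \<noteq> 0) \<and>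
     (\<forall>i<n. i \<noteq> k \<longrightarrow> (\<forall>j<n. D $$ (i,j) = 0))}"

end

theory Submission
  imports Defs
begin

text \<open>A nonnegative matrix is Schur-stable exactly when it has a linear copositive Lyapunov
  vector: a positive row vector \<open>z\<close> with \<open>z A < z\<close> entrywise. If \<open>x\<close> and \<open>y\<close> are such vectors
  for \<open>A\<close> and \<open>B\<close>, and \<open>D\<close> is supported on the single row \<open>k\<close>, then \<open>(y\<^sub>k x, x\<^sub>k y)\<close> is one
  for \<open>[A - D, D; D, B - D]\<close>: in every column the two copies of \<open>D\<close> enter with the weights
  \<open>-y\<^sub>k x\<^sub>k\<close> and \<open>x\<^sub>k y\<^sub>k\<close> and cancel.\<close>

lemma pow_mat_smult:
  assumes "A \<in> carrier_mat n n"
  shows "(c \<cdot>\<^sub>m A) ^\<^sub>m k = c ^ k \<cdot>\<^sub>m (A ^\<^sub>m k :: 'a :: comm_ring_1 mat)"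
proof (induction k)
  case 0
  show ?case using assms by (intro eq_matI, auto)
next
  case (Suc k)
  then show ?case
    using assms
    by (simp add: mult_smult_assoc_mat[of _ n n _ n] mult_smult_distrib[of _ n n _ n])
      (intro eq_matI, auto)
qed

lemma eigenvalue_smult:
  fixes A :: "'a :: field mat"
  assumes A: "A \<in> carrier_mat n n" and "eigenvalue A \<mu>"
  shows "eigenvalue (c \<cdot>\<^sub>m A) (c * \<mu>)"
proof -
  obtain v where v: "v \<in> carrier_vec n" "v \<noteq> 0\<^sub>v n" and Av: "A *\<^sub>v v = \<mu> \<cdot>\<^sub>v v"
    using assms unfolding eigenvalue_def eigenvector_def by auto
  have "(c \<cdot>\<^sub>m A) *\<^sub>v v = (c * \<mu>) \<cdot>\<^sub>v v"
  proof (rule eq_vecI)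
    fix i assume "i < dim_vec ((c * \<mu>) \<cdot>\<^sub>v v)"
    then have i: "i < n" using v by simp
    have "row A i \<bullet> v = \<mu> * v $ i"
      using arg_cong[OF Av, of "\<lambda>w. w $ i"] i A v by simp
    moreover have "((c \<cdot>\<^sub>m A) *\<^sub>v v) $ i = c * (row A i \<bullet> v)"
      using i A v by (simp add: scalar_prod_def sum_distrib_left ac_simps)
    ultimately show "((c \<cdot>\<^sub>m A) *\<^sub>v v) $ i = ((c * \<mu>) \<cdot>\<^sub>v v) $ i"
      using i v by simp
  qed (use A v in auto)
  then show ?thesis
    using A v unfolding eigenvalue_def eigenvector_def by auto
qed

lemma spectral_radius_smult_le:
  assumes A: "A \<in> carrier_mat n n" and n: "n > 0" and c: "c \<noteq> 0"
  shows "spectral_radius (c \<cdot>\<^sub>m A) \<le> norm c * spectral_radius A"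
proof -
  have cA: "c \<cdot>\<^sub>m A \<in> carrier_mat n n" using A by simp
  obtain e where "eigenvalue (c \<cdot>\<^sub>m A) e" and sr: "spectral_radius (c \<cdot>\<^sub>m A) = norm e"
    using spectral_radius_mem_max(1)[OF cA n] unfolding spectrum_def by auto
  then have "eigenvalue ((1 / c) \<cdot>\<^sub>m (c \<cdot>\<^sub>m A)) ((1 / c) * e)"
    using eigenvalue_smult[OF cA] by blast
  moreover have "(1 / c) \<cdot>\<^sub>m (c \<cdot>\<^sub>m A) = A"
    using A c by (intro eq_matI, auto)
  ultimately have "norm (e / c) \<le> spectral_radius A"
    using spectral_radius_mem_max(2)[OF A n] unfolding spectrum_def by auto
  then show ?thesis
    using sr c by (simp add: norm_divide divide_le_eq mult.commute)
qed

text \<open>Rescaling by a radius strictly between the spectral radius and 1 reduces the claim to the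
  boundedness of the powers of a matrix of spectral radius below 1.\<close>

lemma spectral_radius_less_1_imp_pow_mat_tendsto_0:
  fixes A :: "complex mat"
  assumes A: "A \<in> carrier_mat n n" and sr: "spectral_radius A < 1" and ij: "i < n" "j < n"
  shows "(\<lambda>k. (A ^\<^sub>m k) $$ (i, j)) \<longlonglongrightarrow> 0"
proof -
  have n: "n > 0" using ij by simp
  define r where "r = (spectral_radius A + 1) / 2"
  have "spectral_radius A \<ge> 0"
    using spectral_radius_mem_max(1)[OF A n] by auto
  then have r: "0 < r" "r < 1" "spectral_radius A < r"
    using sr unfolding r_def by auto
  define C where "C = complex_of_real (1 / r) \<cdot>\<^sub>m A"
  have C: "C \<in> carrier_mat n n" unfolding C_def using A by simp
  have "spectral_radius C \<le> (1 / r) * spectral_radius A"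
    unfolding C_def using spectral_radius_smult_le[OF A n, of "complex_of_real (1 / r)"] r
    by (simp add: norm_divide)
  also have "\<dots> < 1" using r by (simp add: field_simps)
  finally obtain c where c: "\<And>k. norm_bound (C ^\<^sub>m k) c"
    using spectral_radius_jnf_norm_bound_less_1_upper_triangular[OF C] by auto
  have "A = complex_of_real r \<cdot>\<^sub>m C"
    unfolding C_def using A r by (intro eq_matI, auto)
  then have "(A ^\<^sub>m k) $$ (i, j) = complex_of_real r ^ k * (C ^\<^sub>m k) $$ (i, j)" for k
    using pow_mat_smult[OF C] C ij by simp
  then have bound: "norm ((A ^\<^sub>m k) $$ (i, j)) \<le> norm (r ^ k) * c" for k
    using c[of k] C ij r unfolding norm_bound_def
    by (simp add: norm_mult norm_power mult_left_mono)
  have "(\<lambda>k. r ^ k) \<longlonglongrightarrow> 0"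
    using r by (simp add: LIMSEQ_realpow_zero)
  then show ?thesis
    by (rule tendsto_0_le) (use bound in \<open>intro always_eventually allI\<close>)
qed

lemma schur_stable_imp_pow_mat_tendsto_0:
  assumes A: "A \<in> carrier_mat n n" and "schur_stable A" and ij: "i < n" "j < n"
  shows "(\<lambda>k. (A ^\<^sub>m k) $$ (i, j)) \<longlonglongrightarrow> 0"
proof -
  have "map_mat complex_of_real A ^\<^sub>m k = map_mat complex_of_real (A ^\<^sub>m k)" for k
    by (rule of_real_hom.mat_hom_pow[OF A, symmetric])
  then have "(\<lambda>k. complex_of_real ((A ^\<^sub>m k) $$ (i, j))) \<longlonglongrightarrow> 0"
    using spectral_radius_less_1_imp_pow_mat_tendsto_0[of "map_mat complex_of_real A" n i j]
      assms by (simp add: schur_stable_def)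
  then show ?thesis
    by (metis of_real_0 tendsto_of_real_iff)
qed

lemma nonneg_mat_mult:
  assumes "A \<in> carrier_mat nr n" "B \<in> carrier_mat n nc" "nonneg_mat A" "nonneg_mat B"
  shows "nonneg_mat (A * B)"
  using assms unfolding nonneg_mat_def
  by (auto simp: scalar_prod_def intro!: sum_nonneg)

lemma nonneg_mat_pow:
  assumes "A \<in> carrier_mat n n" "nonneg_mat A"
  shows "nonneg_mat (A ^\<^sub>m k)"
proof (induction k)
  case 0
  then show ?case using assms by (auto simp: nonneg_mat_def)
next
  case (Suc k)
  then show ?case using assms by (simp add: nonneg_mat_mult[of _ n n _ n])
qed

lemma nonneg_four_block_mat:
  assumes "A \<in> carrier_mat n1 m1" "B \<in> carrier_mat n1 m2" "C \<in> carrier_mat n2 m1"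
    "D \<in> carrier_mat n2 m2"
    and "nonneg_mat A" "nonneg_mat B" "nonneg_mat C" "nonneg_mat D"
  shows "nonneg_mat (four_block_mat A B C D)"
  using assms unfolding nonneg_mat_def by auto

lemma column_sum_mult_mat:
  assumes "B \<in> carrier_mat nr n" "A \<in> carrier_mat n nc" "j < nc"
  shows "(\<Sum>l<nr. (B * A) $$ (l, j)) = (\<Sum>i<n. (\<Sum>l<nr. B $$ (l, i)) * A $$ (i, j))"
proof -
  have "(\<Sum>l<nr. (B * A) $$ (l, j)) = (\<Sum>l<nr. \<Sum>i<n. B $$ (l, i) * A $$ (i, j))"
    using assms by (simp add: scalar_prod_def atLeast0LessThan)
  also have "\<dots> = (\<Sum>i<n. \<Sum>l<nr. B $$ (l, i) * A $$ (i, j))"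
    by (rule sum.swap)
  finally show ?thesis
    by (simp add: sum_distrib_right)
qed

definition linear_copositive_lyapunov :: "nat \<Rightarrow> real mat \<Rightarrow> (nat \<Rightarrow> real) \<Rightarrow> bool" where
  "linear_copositive_lyapunov n A z \<longleftrightarrow>
     (\<forall>i<n. 0 < z i) \<and> (\<forall>j<n. (\<Sum>i<n. z i * A $$ (i, j)) < z j)"

text \<open>Take \<open>z = e (I + A + \<dots> + A\<^sup>N)\<close> with \<open>e\<close> the all-ones row vector and \<open>N\<close> so large
  that all column sums of \<open>A\<^bsup>N+1\<^esup>\<close> are below 1; then \<open>z A = z - e + e A\<^bsup>N+1\<^esup> < z\<close>.\<close>

lemma schur_stable_imp_linear_copositive_lyapunov:
  assumes A: "A \<in> carrier_mat n n" and nonneg: "nonneg_mat A" and stable: "schur_stable A"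
  shows "\<exists>z. linear_copositive_lyapunov n A z"
proof -
  define S where "S m j = (\<Sum>i<n. (A ^\<^sub>m m) $$ (i, j))" for m j
  have "(\<lambda>m. S m j) \<longlonglongrightarrow> 0" if "j < n" for j
    unfolding S_def
    by (rule tendsto_null_sum) (use schur_stable_imp_pow_mat_tendsto_0[OF A stable] that in auto)
  then have "\<forall>\<^sub>F m in sequentially. \<forall>j\<in>{..<n}. S m j < 1"
    by (intro eventually_ball_finite ballI order_tendstoD(2)[of _ 0]) auto
  then obtain N where N: "\<And>j. j < n \<Longrightarrow> S (Suc N) j < 1"
    unfolding eventually_sequentially by (meson le_SucI lessThan_iff order_refl)
  have S_0: "S 0 j = 1" if "j < n" for j
    unfolding S_def using A that by simp
  have S_nonneg: "0 \<le> S m j" if "j < n" for m j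
    unfolding S_def using nonneg_mat_pow[OF A nonneg, of m] A that
    by (intro sum_nonneg) (simp add: nonneg_mat_def)
  have S_Suc: "(\<Sum>i<n. S m i * A $$ (i, j)) = S (Suc m) j" if "j < n" for m j
    unfolding S_def using column_sum_mult_mat[of "A ^\<^sub>m m" n n A n j] A that by simp
  define z where "z j = (\<Sum>m\<le>N. S m j)" for j
  have "linear_copositive_lyapunov n A z"
    unfolding linear_copositive_lyapunov_def
  proof (intro conjI allI impI)
    fix i assume i: "i < n"
    have "S 0 i \<le> z i"
      unfolding z_def using S_nonneg[OF i] by (intro member_le_sum) auto
    then show "0 < z i" using S_0[OF i] by simp
  next
    fix j assume j: "j < n"
    have "(\<Sum>i<n. z i * A $$ (i, j)) = (\<Sum>m\<le>N. \<Sum>i<n. S m i * A $$ (i, j))"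
      unfolding z_def sum_distrib_right by (rule sum.swap)
    also have "\<dots> = (\<Sum>m\<le>N. S (Suc m) j)"
      using S_Suc[OF j] by simp
    also have "\<dots> = z j - S 0 j + S (Suc N) j"
      unfolding z_def using sum.atMost_Suc_shift[of "\<lambda>m. S m j" N] sum.atMost_Suc[of "\<lambda>m. S m j" N]
      by simp
    also have "\<dots> < z j"
      using S_0[OF j] N[OF j] by simp
    finally show "(\<Sum>i<n. z i * A $$ (i, j)) < z j" .
  qed
  then show ?thesis by blast
qed

lemma eigenvector_norm_le_nonneg_mat:
  assumes M: "M \<in> carrier_mat n n" and nonneg: "nonneg_mat M"
    and ev: "eigenvector (map_mat complex_of_real M) v e" and i: "i < n"
  shows "norm e * norm (v $ i) \<le> (\<Sum>j<n. M $$ (i, j) * norm (v $ j))"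
proof -
  have v: "v \<in> carrier_vec n" and Mv: "map_mat complex_of_real M *\<^sub>v v = e \<cdot>\<^sub>v v"
    using ev M unfolding eigenvector_def by auto
  have "e * v $ i = (\<Sum>j<n. complex_of_real (M $$ (i, j)) * v $ j)"
    using arg_cong[OF Mv, of "\<lambda>w. w $ i"] M v i by (simp add: scalar_prod_def atLeast0LessThan)
  then have "norm e * norm (v $ i) = norm (\<Sum>j<n. complex_of_real (M $$ (i, j)) * v $ j)"
    by (metis norm_mult)
  also have "\<dots> \<le> (\<Sum>j<n. norm (complex_of_real (M $$ (i, j)) * v $ j))"
    by (rule norm_sum)
  also have "\<dots> = (\<Sum>j<n. M $$ (i, j) * norm (v $ j))"
    using nonneg M i unfolding nonneg_mat_def by (intro sum.cong) (auto simp: norm_mult)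
  finally show ?thesis .
qed

text \<open>For an eigenpair \<open>(e, v)\<close> put \<open>w = |v|\<close>; then \<open>|e| z w \<le> z M w < z w\<close>.\<close>

lemma linear_copositive_lyapunov_imp_schur_stable:
  assumes M: "M \<in> carrier_mat n n" and n: "n > 0" and nonneg: "nonneg_mat M"
    and lyap: "linear_copositive_lyapunov n M z"
  shows "schur_stable M"
proof -
  let ?Mc = "map_mat complex_of_real M"
  have Mc: "?Mc \<in> carrier_mat n n" using M by simp
  obtain e where "eigenvalue ?Mc e" and sr: "spectral_radius ?Mc = norm e"
    using spectral_radius_mem_max(1)[OF Mc n] unfolding spectrum_def by auto
  then obtain v where ev: "eigenvector ?Mc v e"
    unfolding eigenvalue_def by auto
  then obtain j0 where j0: "j0 < n" "v $ j0 \<noteq> 0"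
    using M unfolding eigenvector_def by (auto simp: vec_eq_iff)
  define w where "w j = norm (v $ j)" for j
  have z_pos: "\<And>i. i < n \<Longrightarrow> 0 < z i"
    and z_M: "\<And>j. j < n \<Longrightarrow> (\<Sum>i<n. z i * M $$ (i, j)) < z j"
    using lyap unfolding linear_copositive_lyapunov_def by auto
  have "norm e * (\<Sum>i<n. z i * w i) = (\<Sum>i<n. z i * (norm e * w i))"
    by (simp add: sum_distrib_left ac_simps)
  also have "\<dots> \<le> (\<Sum>i<n. z i * (\<Sum>j<n. M $$ (i, j) * w j))"
    using eigenvector_norm_le_nonneg_mat[OF M nonneg ev] z_pos unfolding w_def
    by (intro sum_mono mult_left_mono) (auto simp: less_imp_le)
  also have "\<dots> = (\<Sum>i<n. \<Sum>j<n. z i * M $$ (i, j) * w j)"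
    by (simp add: sum_distrib_left mult.assoc)
  also have "\<dots> = (\<Sum>j<n. (\<Sum>i<n. z i * M $$ (i, j)) * w j)"
    by (subst sum.swap) (simp add: sum_distrib_right)
  also have "\<dots> < (\<Sum>j<n. z j * w j)"
  proof (rule sum_strict_mono_ex1)
    show "\<forall>j\<in>{..<n}. (\<Sum>i<n. z i * M $$ (i, j)) * w j \<le> z j * w j"
      using z_M unfolding w_def by (simp add: mult_right_mono less_imp_le)
    show "\<exists>j\<in>{..<n}. (\<Sum>i<n. z i * M $$ (i, j)) * w j < z j * w j"
      using z_M j0 unfolding w_def by (intro bexI[of _ j0]) auto
  qed simp
  finally have "norm e * (\<Sum>i<n. z i * w i) < (\<Sum>i<n. z i * w i)" .
  moreover have "0 < (\<Sum>i<n. z i * w i)"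
    using z_pos j0 unfolding w_def
    by (intro sum_pos2[of _ j0]) (simp_all add: less_imp_le)
  ultimately show ?thesis
    unfolding schur_stable_def sr by (simp add: mult_less_cancel_right2)
qed

lemma sum_lessThan_add: "(\<Sum>i<(m :: nat) + n. f i) = (\<Sum>i<m. f i) + (\<Sum>i<n. f (m + i))"
  by (induction n) (simp_all add: ac_simps)

lemma weighted_column_sum_single_row_cancel:
  fixes D P :: "'a :: comm_ring mat"
  assumes D_rows: "\<And>i. i < n \<Longrightarrow> i \<noteq> k \<Longrightarrow> D $$ (i, j) = 0" and weights: "a * u k = b * v k"
  shows "(\<Sum>i<n. a * u i * (P $$ (i, j) - D $$ (i, j)) + b * v i * D $$ (i, j))
    = a * (\<Sum>i<n. u i * P $$ (i, j))"
proof -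
  have "a * u i * (P $$ (i, j) - D $$ (i, j)) + b * v i * D $$ (i, j) = a * (u i * P $$ (i, j))"
    if "i < n" for i
    using D_rows[OF that] weights
    by (cases "i = k") (simp_all add: right_diff_distrib mult.assoc[symmetric])
  then show ?thesis
    by (simp add: sum_distrib_left)
qed

lemma linear_copositive_lyapunov_four_block_mat:
  assumes A: "A \<in> carrier_mat n n" and B: "B \<in> carrier_mat n n" and D: "D \<in> carrier_mat n n"
    and k: "k < n" and D_rows: "\<And>i j. i < n \<Longrightarrow> j < n \<Longrightarrow> i \<noteq> k \<Longrightarrow> D $$ (i, j) = 0"
    and x: "linear_copositive_lyapunov n A x" and y: "linear_copositive_lyapunov n B y"
  shows "linear_copositive_lyapunov (n + n) (four_block_mat (A - D) D D (B - D))
    (\<lambda>i. if i < n then y k * x i else x k * y (i - n))"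
    (is "linear_copositive_lyapunov _ ?M ?z")
proof -
  have x_pos: "0 < x i" and y_pos: "0 < y i" if "i < n" for i
    using x y that unfolding linear_copositive_lyapunov_def by auto
  have "(\<Sum>i<n + n. ?z i * ?M $$ (i, j)) < ?z j" if j: "j < n + n" for j
  proof (cases "j < n")
    case True
    have "(\<Sum>i<n + n. ?z i * ?M $$ (i, j)) = y k * (\<Sum>i<n. x i * A $$ (i, j))"
      unfolding sum_lessThan_add sum.distrib[symmetric]
      using A B D True D_rows
        weighted_column_sum_single_row_cancel[where k = k and a = "y k" and u = x and b = "x k"
          and v = y]
      by simp
    also have "\<dots> < ?z j"
      using x True y_pos[OF k] unfolding linear_copositive_lyapunov_def by simp
    finally show ?thesis .
  next
    case False
    then obtain j' where j': "j = n + j'" "j' < n"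
      using j by (metis add_diff_inverse_nat add_less_cancel_left)
    have "(\<Sum>i<n + n. ?z i * ?M $$ (i, j)) = x k * (\<Sum>i<n. y i * B $$ (i, j'))"
      unfolding sum_lessThan_add sum.distrib[symmetric]
      using A B D j' D_rows
        weighted_column_sum_single_row_cancel[where k = k and a = "x k" and u = y and b = "y k"
          and v = x]
      by (simp add: ac_simps)
    also have "\<dots> < ?z j"
      using y j' x_pos[OF k] unfolding linear_copositive_lyapunov_def by simp
    finally show ?thesis .
  qed
  moreover have "0 < ?z i" if "i < n + n" for i
    using that k x_pos y_pos by simp
  ultimately show ?thesis
    unfolding linear_copositive_lyapunov_def by blast
qed

theorem theorem4:
  fixes n :: nat and A B D :: "real mat"
  assumes "0 < n"
    and "extended_leslie n A" and "extended_leslie n B"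
    and "schur_stable A" and "schur_stable B"
    and "D \<in> L1_set n A B"
  shows "schur_stable (four_block_mat (A - D) D D (B - D))"
proof -
  have A: "A \<in> carrier_mat n n" "nonneg_mat A" and B: "B \<in> carrier_mat n n" "nonneg_mat B"
    using assms(2,3) unfolding extended_leslie_def by auto
  have D: "D \<in> carrier_mat n n" "nonneg_mat D" "nonneg_mat (A - D)" "nonneg_mat (B - D)"
    using assms(6) unfolding L1_set_def L_set_def by auto
  obtain k where k: "k < n" and D_rows: "\<And>i j. i < n \<Longrightarrow> j < n \<Longrightarrow> i \<noteq> k \<Longrightarrow> D $$ (i, j) = 0"
    using assms(6) unfolding L1_set_def by auto
  obtain x y where "linear_copositive_lyapunov n A x" "linear_copositive_lyapunov n B y"
    using schur_stable_imp_linear_copositive_lyapunov A B assms(4,5) by metis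
  then have "linear_copositive_lyapunov (n + n) (four_block_mat (A - D) D D (B - D))
      (\<lambda>i. if i < n then y k * x i else x k * y (i - n))"
    using linear_copositive_lyapunov_four_block_mat[OF A(1) B(1) D(1) k D_rows] by blast
  moreover have "nonneg_mat (four_block_mat (A - D) D D (B - D))"
    using A B D by (intro nonneg_four_block_mat[of _ n n]) auto
  ultimately show ?thesis
    using A B D assms(1) by (intro linear_copositive_lyapunov_imp_schur_stable[of _ "n + n"]) auto
qed

end
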